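(* Let $\Phi$ be a channel matrix whose rows $P^1,P^2,P^3\in\Delta^n$ are in general position, let $Q^0$ be the equidistant point from $P^1,P^2,P^3$ and $\boldsymbol\lambda^0$ its barycentric coordinate about $P^1,P^2,P^3$. If $\lambda^0_1,\lambda^0_2,\lambda^0_3\ge0$, then the output distribution achieving the channel capacity is $Q^\ast=Q^0$ and the channel capacity is $C=D(P^1\|Q^0)$.
   Context: $\Delta^n=\{Q:Q_j>0,\sum_jQ_j=1\}$, $\bar\Delta^m=\{\boldsymbol\lambda:\lambda_i\ge0,\sum_i\lambda_i=1\}$; $D(Q\|Q')=\sum_jQ_j\log(Q_j/Q'_j)$. Rows are in general position if $P^2-P^1,\dots,P^m-P^1$ are linearly independent. $L(S^1,\dots,S^r)=\{\sum_i\lambda_iS^i:\sum_i\lambda_i=1\}\cap\Delta^n$. The barycentric coordinate of $Q\in L(P^1,\dots,P^m)$ is the unique $\boldsymbol\lambda$ with $\sum_i\lambda_i=1$, $Q=\sum_i\lambda_iP^i$. The equidistant point is the unique $Q^0\in L(P^1,\dots,P^m)$ with $D(P^1\|Q^0)=\dots=D(P^m\|Q^0)$. Mutual information $I(\boldsymbol\lambda,\Phi)=\sum_{i,j}\lambda_iP^i_j\log(P^i_j/Q_j)$ with $Q=\boldsymbol\lambda\Phi$; capacity $C=\max_{\boldsymbol\lambda\in\bar\Delta^m}I(\boldsymbol\lambda,\Phi)$; the capacity-achieving output distribution is $Q^\ast=\boldsymbol\lambda^\ast\Phi$ for a maximizer $\boldsymbol\lambda^\ast$ (unique). *)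

theory Defs
  imports "HOL-Analysis.Analysis"
begin

text \<open>Distributions on the output alphabet {0..<n} are functions nat => real.
  A channel matrix with m rows is P :: nat => nat => real, row i (i in {1..m}) being P i.\<close>

definition open_simplex :: "nat \<Rightarrow> (nat \<Rightarrow> real) \<Rightarrow> bool" where
  "open_simplex n Q \<longleftrightarrow> (\<forall>j<n. Q j > 0) \<and> (\<Sum>j<n. Q j) = 1"

definition closed_simplex :: "nat \<Rightarrow> (nat \<Rightarrow> real) \<Rightarrow> bool" where
  "closed_simplex m lam \<longleftrightarrow> (\<forall>i\<in>{1..m}. lam i \<ge> 0) \<and> (\<Sum>i=1..m. lam i) = 1"

definition KL :: "nat \<Rightarrow> (nat \<Rightarrow> real) \<Rightarrow> (nat \<Rightarrow> real) \<Rightarrow> real" where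
  "KL n Q Q' = (\<Sum>j<n. Q j * ln (Q j / Q' j))"

definition outdist :: "nat \<Rightarrow> (nat \<Rightarrow> nat \<Rightarrow> real) \<Rightarrow> (nat \<Rightarrow> real) \<Rightarrow> nat \<Rightarrow> real" where
  "outdist m P lam = (\<lambda>j. \<Sum>i=1..m. lam i * P i j)"

definition general_position :: "nat \<Rightarrow> nat \<Rightarrow> (nat \<Rightarrow> nat \<Rightarrow> real) \<Rightarrow> bool" where
  "general_position n m P \<longleftrightarrow>
     (\<forall>c :: nat \<Rightarrow> real. (\<forall>j<n. (\<Sum>i=2..m. c i * (P i j - P 1 j)) = 0) \<longrightarrow> (\<forall>i\<in>{2..m}. c i = 0))"

definition barycentric :: "nat \<Rightarrow> nat \<Rightarrow> (nat \<Rightarrow> nat \<Rightarrow> real) \<Rightarrow> (nat \<Rightarrow> real) \<Rightarrow> (nat \<Rightarrow> real) \<Rightarrow> bool" where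
  "barycentric n m P Q lam \<longleftrightarrow> (\<Sum>i=1..m. lam i) = 1 \<and> (\<forall>j<n. Q j = outdist m P lam j)"

definition equidistant_point :: "nat \<Rightarrow> nat \<Rightarrow> (nat \<Rightarrow> nat \<Rightarrow> real) \<Rightarrow> (nat \<Rightarrow> real) \<Rightarrow> bool" where
  "equidistant_point n m P Q \<longleftrightarrow> open_simplex n Q \<and> (\<exists>lam. barycentric n m P Q lam)
     \<and> (\<forall>i\<in>{1..m}. KL n (P i) Q = KL n (P 1) Q)"

definition mutual_info :: "nat \<Rightarrow> nat \<Rightarrow> (nat \<Rightarrow> nat \<Rightarrow> real) \<Rightarrow> (nat \<Rightarrow> real) \<Rightarrow> real" where
  "mutual_info n m P lam =
     (\<Sum>i=1..m. \<Sum>j<n. lam i * P i j * ln (P i j / outdist m P lam j))"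

definition capacity :: "nat \<Rightarrow> nat \<Rightarrow> (nat \<Rightarrow> nat \<Rightarrow> real) \<Rightarrow> real" where
  "capacity n m P = (SUP lam\<in>{lam. closed_simplex m lam}. mutual_info n m P lam)"

end

theory Submission
  imports Defs
begin

text \<open>For every distribution R the mutual information satisfies
  I(lam) = (SUM i. lam_i D(P^i || R)) - D(lam Phi || R). Taking R = Q^0, the first term is the
  common distance d for every input distribution lam, so I(lam) = d - D(lam Phi || Q^0).
  By Gibbs' inequality this is at most d, with equality exactly when lam Phi = Q^0; the bound is
  attained at lam^0, which is an input distribution because its coordinates are nonnegative.\<close>

lemma KL_eq_sum_nonneg_terms:
  assumes Q: "open_simplex n Q" and R: "open_simplex n R"
  shows "KL n Q R = (\<Sum>j<n. Q j * (R j / Q j - 1 - ln (R j / Q j)))"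
proof -
  have pos: "Q j > 0" "R j > 0" if "j < n" for j
    using Q R that by (auto simp: open_simplex_def)
  have "(\<Sum>j<n. Q j * (R j / Q j - 1)) = (\<Sum>j<n. R j - Q j)"
  proof (intro sum.cong refl)
    fix j assume "j \<in> {..<n}"
    then have "Q j \<noteq> 0" using pos by fastforce
    then show "Q j * (R j / Q j - 1) = R j - Q j" by (simp add: field_simps)
  qed
  also have "\<dots> = (\<Sum>j<n. R j) - (\<Sum>j<n. Q j)"
    by (rule sum_subtractf)
  also have "\<dots> = 0" using Q R by (simp add: open_simplex_def)
  finally have "(\<Sum>j<n. Q j * (R j / Q j - 1)) = 0" .
  moreover have "Q j * ln (Q j / R j) = Q j * (R j / Q j - 1 - ln (R j / Q j)) - Q j * (R j / Q j - 1)"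
    if "j < n" for j
    using pos[OF that] by (simp add: ln_div algebra_simps)
  ultimately show ?thesis
    unfolding KL_def by (simp add: sum_subtractf)
qed

lemma KL_term_nonneg:
  fixes q r :: real
  assumes "q > 0" "r > 0"
  shows "q * (r / q - 1 - ln (r / q)) \<ge> 0"
  using assms ln_le_minus_one[of "r / q"] by simp

lemma KL_nonneg:
  assumes "open_simplex n Q" "open_simplex n R"
  shows "KL n Q R \<ge> 0"
  using assms unfolding KL_eq_sum_nonneg_terms[OF assms]
  by (intro sum_nonneg KL_term_nonneg) (auto simp: open_simplex_def)

lemma KL_eq_0_imp_eq:
  assumes Q: "open_simplex n Q" and R: "open_simplex n R" and "KL n Q R = 0"
  shows "\<forall>j<n. Q j = R j"
proof (intro allI impI)
  fix j assume j: "j < n"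
  have pos: "Q k > 0" "R k > 0" if "k < n" for k
    using Q R that by (auto simp: open_simplex_def)
  have "Q j * (R j / Q j - 1 - ln (R j / Q j)) = 0"
    using assms(3) j pos KL_term_nonneg
    unfolding KL_eq_sum_nonneg_terms[OF Q R] by (subst (asm) sum_nonneg_eq_0_iff) auto
  then have "ln (R j / Q j) = R j / Q j - 1" using pos[OF j] by simp
  then have "R j / Q j = 1" using pos[OF j] by (intro ln_eq_minus_one) auto
  then show "Q j = R j" using pos[OF j] by simp
qed

lemma KL_self: "KL n Q Q = 0" if "\<forall>j<n. Q j > 0"
  using that unfolding KL_def by (intro sum.neutral) auto

lemma open_simplex_outdist:
  assumes rows: "\<forall>i\<in>{1..m}. open_simplex n (P i)" and lam: "closed_simplex m lam"
  shows "open_simplex n (outdist m P lam)"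
proof -
  have lam_nonneg: "\<forall>i\<in>{1..m}. lam i \<ge> 0" and lam_sum: "(\<Sum>i=1..m. lam i) = 1"
    using lam unfolding closed_simplex_def by auto
  obtain k where k: "k \<in> {1..m}" "lam k > 0"
  proof (rule ccontr)
    assume "\<not> thesis"
    with that lam_nonneg have "\<forall>i\<in>{1..m}. lam i = 0" by force
    with lam_sum show False by simp
  qed
  have "outdist m P lam j > 0" if j: "j < n" for j
    unfolding outdist_def
  proof (rule sum_pos2[OF _ k(1)])
    show "0 < lam k * P k j" using k rows j by (auto simp: open_simplex_def)
    show "0 \<le> lam i * P i j" if "i \<in> {1..m}" for i
      using that rows j lam_nonneg by (auto simp: open_simplex_def less_imp_le)
  qed simp
  moreover have "(\<Sum>j<n. outdist m P lam j) = (\<Sum>i=1..m. lam i * (\<Sum>j<n. P i j))"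
    unfolding outdist_def by (subst sum.swap) (simp add: sum_distrib_left)
  moreover have "\<dots> = 1"
    using rows lam_sum by (simp add: open_simplex_def)
  ultimately show ?thesis by (simp add: open_simplex_def)
qed

lemma mutual_info_eq_KL_diff:
  assumes rows: "\<forall>i\<in>{1..m}. open_simplex n (P i)"
    and lam: "closed_simplex m lam" and R: "open_simplex n R"
  shows "mutual_info n m P lam = (\<Sum>i=1..m. lam i * KL n (P i) R) - KL n (outdist m P lam) R"
proof -
  let ?Q = "outdist m P lam"
  have Q_pos: "\<forall>j<n. ?Q j > 0"
    using open_simplex_outdist[OF rows lam] by (simp add: open_simplex_def)
  have "mutual_info n m P lam = (\<Sum>i=1..m. \<Sum>j<n.
      lam i * P i j * ln (P i j / R j) - lam i * P i j * ln (?Q j / R j))"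
    unfolding mutual_info_def
  proof (intro sum.cong refl)
    fix i j assume "i \<in> {1..m}" "j \<in> {..<n}"
    then have "P i j > 0" "R j > 0" "?Q j > 0"
      using rows R Q_pos by (auto simp: open_simplex_def)
    then show "lam i * P i j * ln (P i j / ?Q j)
        = lam i * P i j * ln (P i j / R j) - lam i * P i j * ln (?Q j / R j)"
      by (simp add: ln_div algebra_simps)
  qed
  also have "\<dots> = (\<Sum>i=1..m. \<Sum>j<n. lam i * P i j * ln (P i j / R j))
      - (\<Sum>i=1..m. \<Sum>j<n. lam i * P i j * ln (?Q j / R j))"
    by (simp add: sum_subtractf)
  also have "(\<Sum>i=1..m. \<Sum>j<n. lam i * P i j * ln (P i j / R j))
      = (\<Sum>i=1..m. lam i * KL n (P i) R)"
    by (simp add: KL_def sum_distrib_left mult.assoc)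
  also have "(\<Sum>i=1..m. \<Sum>j<n. lam i * P i j * ln (?Q j / R j)) = KL n ?Q R"
    unfolding KL_def outdist_def by (subst sum.swap) (simp add: sum_distrib_right)
  finally show ?thesis .
qed

lemma mutual_info_equidistant:
  assumes rows: "\<forall>i\<in>{1..m}. open_simplex n (P i)"
    and lam: "closed_simplex m lam" and R: "open_simplex n R"
    and equi: "\<forall>i\<in>{1..m}. KL n (P i) R = d"
  shows "mutual_info n m P lam = d - KL n (outdist m P lam) R"
proof -
  have "(\<Sum>i=1..m. lam i * KL n (P i) R) = (\<Sum>i=1..m. lam i) * d"
    using equi by (simp add: sum_distrib_right)
  then show ?thesis
    using mutual_info_eq_KL_diff[OF rows lam R] lam by (simp add: closed_simplex_def)
qed

theorem capacity_equidistant_point: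
  assumes rows: "\<forall>i\<in>{1..m}. open_simplex n (P i)"
    and eq: "equidistant_point n m P Q0"
    and bary: "barycentric n m P Q0 lam0"
    and nonneg: "\<forall>i\<in>{1..m}. lam0 i \<ge> 0"
  shows "capacity n m P = KL n (P 1) Q0"
    and "closed_simplex m lam0" and "mutual_info n m P lam0 = KL n (P 1) Q0"
    and "\<And>lam. closed_simplex m lam \<Longrightarrow> mutual_info n m P lam = capacity n m P
           \<Longrightarrow> \<forall>j<n. outdist m P lam j = Q0 j"
proof -
  let ?d = "KL n (P 1) Q0"
  have Q0: "open_simplex n Q0" and equi: "\<forall>i\<in>{1..m}. KL n (P i) Q0 = ?d"
    using eq unfolding equidistant_point_def by blast+
  note I = mutual_info_equidistant[OF rows _ Q0 equi]
  show lam0: "closed_simplex m lam0"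
    using bary nonneg by (simp add: closed_simplex_def barycentric_def)
  have "KL n (outdist m P lam0) Q0 = KL n Q0 Q0"
    using bary unfolding KL_def barycentric_def by (intro sum.cong) auto
  then show I0: "mutual_info n m P lam0 = ?d"
    using I[OF lam0] KL_self Q0 by (simp add: open_simplex_def)
  show cap: "capacity n m P = ?d"
    unfolding capacity_def
  proof (rule cSup_eq_maximum)
    show "?d \<in> mutual_info n m P ` {lam. closed_simplex m lam}"
      using lam0 I0 by (metis image_eqI mem_Collect_eq)
    show "x \<le> ?d" if "x \<in> mutual_info n m P ` {lam. closed_simplex m lam}" for x
      using that I KL_nonneg[OF open_simplex_outdist[OF rows] Q0] by force
  qed
  show "\<forall>j<n. outdist m P lam j = Q0 j"
    if "closed_simplex m lam" "mutual_info n m P lam = capacity n m P" for lam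
    using that I cap KL_eq_0_imp_eq[OF open_simplex_outdist[OF rows] Q0] by auto
qed

theorem theorem15:
  fixes n :: nat and P :: "nat \<Rightarrow> nat \<Rightarrow> real" and Q0 lam0 :: "nat \<Rightarrow> real"
  assumes rows: "\<forall>i\<in>{1..3}. open_simplex n (P i)"
    and gp: "general_position n 3 P"
    and eq: "equidistant_point n 3 P Q0"
    and bary: "barycentric n 3 P Q0 lam0"
    and nonneg: "lam0 1 \<ge> 0" "lam0 2 \<ge> 0" "lam0 3 \<ge> 0"
  shows "capacity n 3 P = KL n (P 1) Q0
    \<and> (\<exists>lam. closed_simplex 3 lam \<and> mutual_info n 3 P lam = capacity n 3 P)
    \<and> (\<forall>lam. closed_simplex 3 lam \<and> mutual_info n 3 P lam = capacity n 3 P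
              \<longrightarrow> (\<forall>j<n. outdist 3 P lam j = Q0 j))"
proof -
  have "{1..3::nat} = {1, 2, 3}" by auto
  then have "\<forall>i\<in>{1..3}. lam0 i \<ge> 0" using nonneg by simp
  note main = capacity_equidistant_point[OF rows eq bary this]
  show ?thesis
    using main by auto
qed

end
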